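(* Fix integers $s\ge t\ge 1$ and $n\ge 0$. Let $\mathcal{B}_{s,t}(n)$ be the number of distinct sets of balls that can be on the lawn after $n$ turns of the $(s,t)$-tennis ball process. Then $\mathcal{B}_{s,t}(n)=|\mathrm{SVT}((n+1)^2,\rho)|$, where $\rho$ is the density on the shape $(n+1,n+1)$ with $\rho_{1,j}=t$ and $\rho_{2,j}=s-t$ for all $1\le j\le n+1$.
   Context: The $(s,t)$-tennis ball process: balls are numbered $1,2,\dots,ns$. There is a pool, initially empty. At turn $i$ ($1\le i\le n$), the balls numbered $(i-1)s+1,\dots,is$ are added to the pool, and then any $t$ balls of the pool are removed from it and thrown onto the lawn. After $n$ turns the lawn contains a set of $nt$ balls; $\mathcal{B}_{s,t}(n)$ counts the possible such sets over all possible choices. A density on a shape $\lambda$ is an assignment of a nonnegative integer $\rho_{i,j}$ to every cell $(i,j)$ (row $i$, column $j$); let $N=\sum\rho_{i,j}$. A standard set-valued Young tableau of shape $\lambda$ and density $\rho$ assigns to each cell $(i,j)$ a set $S_{i,j}$ with $|S_{i,j}|=\rho_{i,j}$, the sets partitioning $[N]$, such that every element of $S_{i,j}$ is smaller than every element of $S_{i,j+1}$ and of $S_{i+1,j}$ whenever those cells exist (conditions involving an empty set are vacuous). $\mathrm{SVT}(\lambda,\rho)$ is the set of these tableaux. *)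

theory Defs
  imports Main
begin

text \<open>States after i turns: pairs (pool, lawn). At turn i+1 the balls
  i*s+1, ..., (i+1)*s are added to the pool, then any t balls of the pool
  are thrown onto the lawn.\<close>

fun tennis_states :: "nat \<Rightarrow> nat \<Rightarrow> nat \<Rightarrow> (nat set \<times> nat set) set" where
  "tennis_states s t 0 = {({}, {})}"
| "tennis_states s t (Suc i) =
     {((P \<union> {i*s+1..(Suc i)*s}) - T, L \<union> T) | P L T.
        (P, L) \<in> tennis_states s t i \<and> T \<subseteq> P \<union> {i*s+1..(Suc i)*s} \<and> card T = t}"

definition tennis_lawns :: "nat \<Rightarrow> nat \<Rightarrow> nat \<Rightarrow> nat set set" where
  "tennis_lawns s t n = snd ` tennis_states s t n"

definition tennis_count :: "nat \<Rightarrow> nat \<Rightarrow> nat \<Rightarrow> nat" where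
  "tennis_count s t n = card (tennis_lawns s t n)"

text \<open>A shape is a list of row lengths (rows indexed from 1); the cells are
  (i,j) with 1 \<le> i \<le> length lam and 1 \<le> j \<le> lam!(i-1).\<close>

definition cells :: "nat list \<Rightarrow> (nat \<times> nat) set" where
  "cells lam = {(i, j). 1 \<le> i \<and> i \<le> length lam \<and> 1 \<le> j \<and> j \<le> lam ! (i - 1)}"

definition density_total :: "nat list \<Rightarrow> (nat \<times> nat \<Rightarrow> nat) \<Rightarrow> nat" where
  "density_total lam \<rho> = (\<Sum>c\<in>cells lam. \<rho> c)"

text \<open>Tableaux are functions from cells to sets; outside the cells they are
  the empty set (so that distinct tableaux are distinct functions).\<close>
definition SVT :: "nat list \<Rightarrow> (nat \<times> nat \<Rightarrow> nat) \<Rightarrow> (nat \<times> nat \<Rightarrow> nat set) set" where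
  "SVT lam \<rho> = {S.
      (\<forall>c. c \<notin> cells lam \<longrightarrow> S c = {}) \<and>
      (\<forall>c\<in>cells lam. finite (S c) \<and> card (S c) = \<rho> c) \<and>
      (\<forall>c\<in>cells lam. \<forall>d\<in>cells lam. c \<noteq> d \<longrightarrow> S c \<inter> S d = {}) \<and>
      (\<Union>c\<in>cells lam. S c) = {1..density_total lam \<rho>} \<and>
      (\<forall>i j. (i, j) \<in> cells lam \<and> (i, Suc j) \<in> cells lam \<longrightarrow>
              (\<forall>a\<in>S (i, j). \<forall>b\<in>S (i, Suc j). a < b)) \<and>
      (\<forall>i j. (i, j) \<in> cells lam \<and> (Suc i, j) \<in> cells lam \<longrightarrow>
              (\<forall>a\<in>S (i, j). \<forall>b\<in>S (Suc i, j). a < b))}"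

end

theory Submission
  imports Defs
begin

text \<open>
  The lawns reachable after \<open>n\<close> turns are exactly the sets \<open>L \<subseteq> {1..ns}\<close> of size \<open>nt\<close>
  satisfying the ballot condition \<open>|L \<inter> {1..ks}| \<ge> kt\<close> for all \<open>k \<le> n\<close>: such a set is
  reached by throwing its \<open>t\<close> largest balls last. Prepending \<open>{1..t}\<close> and shifting \<open>L\<close> up
  by \<open>t\<close> gives a set \<open>X \<subseteq> {1..(n+1)s}\<close> of size \<open>(n+1)t\<close>. Cutting \<open>X\<close> into consecutive
  blocks of \<open>t\<close> elements and its complement into consecutive blocks of \<open>s - t\<close> elements
  fills the two rows of a tableau whose rows increase automatically; counting ranks shows
  that the column condition (block \<open>k\<close> of \<open>X\<close> lies below block \<open>k\<close> of the complement) is the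
  shifted ballot condition. Conversely, a tableau is determined by the union of its first row.
\<close>

section \<open>Ranks and consecutive blocks\<close>

definition rank :: "nat set \<Rightarrow> nat \<Rightarrow> nat" where
  "rank X x = card {y\<in>X. y \<le> x}"

definition chunk :: "nat set \<Rightarrow> nat \<Rightarrow> nat \<Rightarrow> nat set" where
  "chunk X c k = {x\<in>X. k * c < rank X x \<and> rank X x \<le> Suc k * c}"

lemma rank_mono: "finite X \<Longrightarrow> x \<le> y \<Longrightarrow> rank X x \<le> rank X y"
  unfolding rank_def by (rule card_mono) auto

lemma rank_strict_mono:
  assumes "finite X" "y \<in> X" "x < y"
  shows "rank X x < rank X y"
proof -
  have "y \<in> {z\<in>X. z \<le> y} - {z\<in>X. z \<le> x}" using assms by auto
  moreover have "{z\<in>X. z \<le> x} \<subseteq> {z\<in>X. z \<le> y}" using assms by auto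
  ultimately have "{z\<in>X. z \<le> x} \<subset> {z\<in>X. z \<le> y}" by blast
  then show ?thesis unfolding rank_def using assms by (simp add: psubset_card_mono)
qed

lemma less_if_rank_less: "finite X \<Longrightarrow> rank X x < rank X y \<Longrightarrow> x < y"
  using rank_mono[of X y x] by linarith

lemma rank_le_card: "finite X \<Longrightarrow> rank X x \<le> card X"
  unfolding rank_def by (rule card_mono) auto

lemma rank_eq_card_iff:
  assumes "finite X"
  shows "rank X x = card X \<longleftrightarrow> (\<forall>y\<in>X. y \<le> x)"
proof -
  have "{y\<in>X. y \<le> x} \<subseteq> X" by auto
  then have "rank X x = card X \<longleftrightarrow> {y\<in>X. y \<le> x} = X"
    unfolding rank_def using card_subset_eq[OF assms] by metis
  then show ?thesis by auto
qed

lemma atLeastAtMost_subset_if_rank_ge: "0 \<notin> X \<Longrightarrow> t \<le> rank X t \<Longrightarrow> {1..t} \<subseteq> X"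
proof -
  assume "0 \<notin> X" "t \<le> rank X t"
  then have "{y\<in>X. y \<le> t} = {1..t}"
    unfolding rank_def by (intro card_seteq) (auto simp: Suc_le_eq intro!: gr0I)
  then show "{1..t} \<subseteq> X" by auto
qed

lemma bij_betw_rank: "finite X \<Longrightarrow> bij_betw (rank X) X {1..card X}"
proof -
  assume fin: "finite X"
  have "inj_on (rank X) X"
    by (rule inj_onI) (metis fin rank_strict_mono less_irrefl nat_neq_iff)
  moreover have "rank X ` X \<subseteq> {1..card X}"
    using fin rank_le_card by (auto simp: rank_def Suc_le_eq card_gt_0_iff)
  ultimately show ?thesis
    by (simp add: bij_betw_def card_image card_subset_eq)
qed

lemma ex_rank_eq: "finite X \<Longrightarrow> 1 \<le> r \<Longrightarrow> r \<le> card X \<Longrightarrow> \<exists>x\<in>X. rank X x = r"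
  using bij_betw_imp_surj_on[OF bij_betw_rank, of X] by (metis atLeastAtMost_iff imageE)

lemma card_rank_le:
  assumes fin: "finite X" and r: "r \<le> card X"
  shows "card {x\<in>X. rank X x \<le> r} = r"
proof -
  have bij: "bij_betw (rank X) X {1..card X}" using bij_betw_rank[OF fin] .
  then have "inj_on (rank X) {x\<in>X. rank X x \<le> r}"
    unfolding bij_betw_def by (rule inj_on_subset[OF conjunct1]) blast
  moreover have "rank X ` {x\<in>X. rank X x \<le> r} = {1..r}"
  proof
    show "rank X ` {x\<in>X. rank X x \<le> r} \<subseteq> {1..r}"
      using bij_betw_apply[OF bij] by auto
    show "{1..r} \<subseteq> rank X ` {x\<in>X. rank X x \<le> r}"
      using ex_rank_eq[OF fin] r by fastforce
  qed
  ultimately show ?thesis by (metis card_atLeastAtMost card_image diff_Suc_1)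
qed

lemma rank_lower_part:
  assumes fin: "finite L" and r: "r \<le> card L"
  shows "rank {x\<in>L. rank L x \<le> r} y = min (rank L y) r"
proof (cases "rank L y \<le> r")
  case True
  then have "{z\<in>{x\<in>L. rank L x \<le> r}. z \<le> y} = {z\<in>L. z \<le> y}"
    using rank_mono[OF fin] by fastforce
  then show ?thesis using True unfolding rank_def by simp
next
  case False
  then have "z \<le> y" if "rank L z \<le> r" for z
    using less_if_rank_less[OF fin, of z y] that by simp
  then have "{z\<in>{x\<in>L. rank L x \<le> r}. z \<le> y} = {x\<in>L. rank L x \<le> r}" by auto
  then show ?thesis using False card_rank_le[OF fin r] unfolding rank_def by simp
qed

lemma rank_compl:
  assumes "X \<subseteq> {1..N}" "x \<le> N"
  shows "rank X x + rank ({1..N} - X) x = x"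
proof -
  have "card {y\<in>X. y \<le> x} + card {y\<in>{1..N} - X. y \<le> x}
      = card ({y\<in>X. y \<le> x} \<union> {y\<in>{1..N} - X. y \<le> x})"
    using assms(1) by (intro card_Un_disjoint[symmetric]) (auto intro: finite_subset)
  also have "{y\<in>X. y \<le> x} \<union> {y\<in>{1..N} - X. y \<le> x} = {1..x}"
    using assms by auto
  finally show ?thesis unfolding rank_def by simp
qed

lemma card_chunk:
  assumes fin: "finite X" and le: "Suc k * c \<le> card X"
  shows "card (chunk X c k) = c"
proof -
  have "chunk X c k = {x\<in>X. rank X x \<le> Suc k * c} - {x\<in>X. rank X x \<le> k * c}"
    unfolding chunk_def by auto
  moreover have "card {x\<in>X. rank X x \<le> Suc k * c} = Suc k * c"
    using card_rank_le[OF fin le] .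
  moreover have "card {x\<in>X. rank X x \<le> k * c} = k * c"
    using card_rank_le[OF fin] le by simp
  moreover have "card ({x\<in>X. rank X x \<le> Suc k * c} - {x\<in>X. rank X x \<le> k * c})
      = card {x\<in>X. rank X x \<le> Suc k * c} - card {x\<in>X. rank X x \<le> k * c}"
    using fin by (intro card_Diff_subset) auto
  ultimately show ?thesis by simp
qed

lemma UN_chunk:
  assumes fin: "finite X" and card: "card X = m * c"
  shows "(\<Union>k<m. chunk X c k) = X"
proof
  show "(\<Union>k<m. chunk X c k) \<subseteq> X" unfolding chunk_def by blast
  show "X \<subseteq> (\<Union>k<m. chunk X c k)"
  proof
    fix x assume x: "x \<in> X"
    define k where "k = (rank X x - 1) div c"
    have r: "1 \<le> rank X x" "rank X x \<le> m * c"
      using bij_betw_apply[OF bij_betw_rank[OF fin] x] card by auto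
    then have "0 < c" by (cases c) auto
    have "k * c \<le> rank X x - 1"
      unfolding k_def by (simp add: div_times_less_eq_dividend)
    moreover have "rank X x - 1 < k * c + c"
      using div_mult_mod_eq[of "rank X x - 1" c] mod_less_divisor[OF \<open>0 < c\<close>, of "rank X x - 1"]
      unfolding k_def by linarith
    moreover have "k < m"
      unfolding k_def using r by (intro less_mult_imp_div_less) simp
    ultimately have "x \<in> chunk X c k"
      using r x unfolding chunk_def by simp (intro conjI; linarith)
    then show "x \<in> (\<Union>k<m. chunk X c k)" using \<open>k < m\<close> by blast
  qed
qed

definition sorted_blocks :: "(nat \<Rightarrow> nat set) \<Rightarrow> nat \<Rightarrow> nat \<Rightarrow> bool" where
  "sorted_blocks F m c \<longleftrightarrow>
     (\<forall>k<m. finite (F k) \<and> card (F k) = c) \<and>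
     (\<forall>k. Suc k < m \<longrightarrow> (\<forall>a\<in>F k. \<forall>b\<in>F (Suc k). a < b))"

lemma sorted_blocks_less:
  assumes sorted: "sorted_blocks F m c"
  shows "i < j \<Longrightarrow> j < m \<Longrightarrow> a \<in> F i \<Longrightarrow> b \<in> F j \<Longrightarrow> a < b"
proof (induction j arbitrary: b)
  case 0
  then show ?case by simp
next
  case (Suc j)
  show ?case
  proof (cases "i = j")
    case True
    then show ?thesis using sorted Suc.prems unfolding sorted_blocks_def by blast
  next
    case False
    have "card (F j) = card (F i)" "finite (F i)"
      using sorted Suc.prems unfolding sorted_blocks_def by auto
    then have "F j \<noteq> {}" using \<open>a \<in> F i\<close> by (metis card.empty card_0_eq empty_iff)
    then obtain z where z: "z \<in> F j" by blast
    have "a < z" using Suc.IH[OF _ _ \<open>a \<in> F i\<close> z] Suc.prems False by simp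
    moreover have "z < b" using sorted Suc.prems z unfolding sorted_blocks_def by blast
    ultimately show ?thesis by simp
  qed
qed

lemma sorted_blocks_disjoint:
  assumes sorted: "sorted_blocks F m c" and "i < m" "j < m" "i \<noteq> j"
  shows "F i \<inter> F j = {}"
proof -
  consider "i < j" | "j < i" using \<open>i \<noteq> j\<close> by linarith
  then show ?thesis
    by cases (use assms in \<open>fastforce dest: sorted_blocks_less[OF sorted]\<close>)+
qed

lemma card_UN_sorted_blocks:
  assumes sorted: "sorted_blocks F m c" and "k \<le> m"
  shows "card (\<Union>i<k. F i) = k * c"
proof -
  have "card (\<Union>i<k. F i) = (\<Sum>i<k. card (F i))"
    using assms sorted_blocks_disjoint[OF sorted] unfolding sorted_blocks_def
    by (intro card_UN_disjoint) auto
  also have "\<dots> = (\<Sum>i<k. c)"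
    using assms unfolding sorted_blocks_def by (intro sum.cong) auto
  finally show ?thesis by simp
qed

lemma sorted_blocks_chunk: "finite X \<Longrightarrow> card X = m * c \<Longrightarrow> sorted_blocks (chunk X c) m c"
  unfolding sorted_blocks_def
proof (intro conjI allI impI ballI)
  fix k assume fin: "finite X" and card: "card X = m * c" and "k < m"
  then have "Suc k * c \<le> card X" by (metis Suc_leI mult_le_mono1)
  then show "card (chunk X c k) = c" using card_chunk[OF fin] by simp
  show "finite (chunk X c k)" using fin by (simp add: chunk_def)
next
  fix k a b assume "finite X" "a \<in> chunk X c k" "b \<in> chunk X c (Suc k)"
  then show "a < b" unfolding chunk_def using less_if_rank_less by fastforce
qed

lemma sorted_blocks_subset_chunk:
  assumes sorted: "sorted_blocks F m c" and k: "k < m"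
  shows "F k \<subseteq> chunk (\<Union>i<m. F i) c k"
proof
  define X where "X = (\<Union>i<m. F i)"
  have fin: "finite X" using sorted unfolding X_def sorted_blocks_def by auto
  have fin_prefix: "finite (\<Union>i<j. F i)" if "j \<le> m" for j
    using sorted that unfolding sorted_blocks_def by auto
  fix x assume x: "x \<in> F k"
  have "{y\<in>X. y \<le> x} \<subseteq> (\<Union>i<Suc k. F i)"
  proof
    fix y assume y: "y \<in> {y\<in>X. y \<le> x}"
    then obtain i where i: "i < m" "y \<in> F i" unfolding X_def by auto
    have "\<not> k < i" using sorted_blocks_less[OF sorted _ i(1) x i(2)] y by fastforce
    then show "y \<in> (\<Union>i<Suc k. F i)" using i by auto
  qed
  then have "rank X x \<le> Suc k * c"
    unfolding rank_def using card_UN_sorted_blocks[OF sorted, of "Suc k"] k fin_prefix[of "Suc k"]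
    by (metis Suc_leI card_mono)
  moreover have "insert x (\<Union>i<k. F i) \<subseteq> {y\<in>X. y \<le> x}"
    using sorted_blocks_less[OF sorted _ k _ x] x k unfolding X_def by fastforce
  then have "card (insert x (\<Union>i<k. F i)) \<le> rank X x"
    unfolding rank_def using fin by (intro card_mono) auto
  moreover have "x \<notin> F i" if "i < k" for i
    using sorted_blocks_disjoint[OF sorted _ k, of i] x k that by auto
  then have "x \<notin> (\<Union>i<k. F i)" by blast
  ultimately have "x \<in> chunk X c k"
    using fin_prefix[of k] card_UN_sorted_blocks[OF sorted, of k] k x
    unfolding chunk_def X_def by auto
  then show "x \<in> chunk (\<Union>i<m. F i) c k" unfolding X_def .
qed

lemma sorted_blocks_eq_chunk:
  assumes sorted: "sorted_blocks F m c" and k: "k < m"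
  shows "F k = chunk (\<Union>i<m. F i) c k"
proof -
  define X where "X = (\<Union>i<m. F i)"
  have fin: "finite X" using sorted unfolding X_def sorted_blocks_def by auto
  have "card X = m * c" unfolding X_def using card_UN_sorted_blocks[OF sorted] by simp
  then have "Suc k * c \<le> card X" using k by (metis Suc_leI mult_le_mono1)
  then have "card (chunk X c k) = card (F k)"
    using card_chunk[OF fin] k sorted unfolding sorted_blocks_def by simp
  moreover have "finite (chunk X c k)" using fin by (simp add: chunk_def)
  ultimately show ?thesis
    using sorted_blocks_subset_chunk[OF sorted k] unfolding X_def by (simp add: card_subset_eq)
qed

lemma sorted_blocks_cong: "(\<And>k. k < m \<Longrightarrow> F k = G k) \<Longrightarrow> sorted_blocks F m c \<longleftrightarrow> sorted_blocks G m c"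
  unfolding sorted_blocks_def by (auto simp: Suc_lessD)

lemma chunk_less_compl_chunk:
  assumes X: "X \<subseteq> {1..m * (a + b)}" and k: "k < m"
    and ballot: "Suc k * a \<le> rank X (k * (a + b) + a)"
    and x: "x \<in> chunk X a k" and y: "y \<in> chunk ({1..m * (a + b)} - X) b k"
  shows "x < y"
proof (rule ccontr)
  let ?C = "{1..m * (a + b)} - X" and ?p = "k * (a + b) + a"
  have finX: "finite X" using X by (auto intro: finite_subset)
  assume "\<not> x < y"
  moreover have "x \<noteq> y" using x y unfolding chunk_def by auto
  ultimately have "y < x" by simp
  then have "rank X y < Suc k * a"
    using rank_strict_mono[OF finX] x unfolding chunk_def by fastforce
  then have "y < ?p" using ballot less_if_rank_less[OF finX, of y ?p] by linarith
  have "?p \<le> Suc k * (a + b)" by simp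
  also have "\<dots> \<le> m * (a + b)" using k by (intro mult_le_mono1) simp
  finally have "rank X ?p + rank ?C ?p = ?p" using rank_compl[OF X] by blast
  moreover have "rank ?C y \<le> rank ?C ?p" using \<open>y < ?p\<close> by (intro rank_mono) auto
  ultimately have "rank ?C y \<le> ?p - rank X ?p" by linarith
  also have "\<dots> \<le> k * b" using ballot by (simp add: add_mult_distrib2)
  finally show False using y unfolding chunk_def by simp
qed

lemma rank_ge_if_chunk_less_compl_chunk:
  assumes X: "X \<subseteq> {1..m * (a + b)}" and card: "card X = m * a" and k: "k < m"
    and column: "\<And>x y. x \<in> chunk X a k \<Longrightarrow> y \<in> chunk ({1..m * (a + b)} - X) b k \<Longrightarrow> x < y"
  shows "Suc k * a \<le> rank X (k * (a + b) + a)"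
proof (cases "a = 0")
  case False
  define C where "C = {1..m * (a + b)} - X"
  have finX: "finite X" and finC: "finite C" using X unfolding C_def by (auto intro: finite_subset)
  have cardC: "card C = m * b"
    using card card_Diff_subset[OF finX X] unfolding C_def by (simp add: add_mult_distrib2)
  have "1 \<le> Suc k * a" "Suc k * a \<le> card X"
    using False card k by (simp, metis Suc_leI mult_le_mono1)
  then obtain x where x: "x \<in> X" "rank X x = Suc k * a"
    using ex_rank_eq[OF finX] by blast
  then have x_chunk: "x \<in> chunk X a k" using False unfolding chunk_def by simp
  have "rank C x \<le> k * b"
  proof (rule ccontr)
    assume less: "\<not> rank C x \<le> k * b"
    have le: "rank C x \<le> m * b" using rank_le_card[OF finC] cardC by simp
    with less have "b \<noteq> 0" by (cases b) auto
    have "Suc (k * b) \<le> card C" using less le cardC by linarith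
    then obtain y where y: "y \<in> C" "rank C y = Suc (k * b)"
      using ex_rank_eq[OF finC, of "Suc (k * b)"] by auto
    then have "y \<in> chunk C b k" using \<open>b \<noteq> 0\<close> unfolding chunk_def by simp
    then have "rank C x < rank C y"
      using column[OF x_chunk] rank_strict_mono[OF finC y(1)] unfolding C_def by blast
    then show False using less y by simp
  qed
  moreover have "x \<le> m * (a + b)" using x X by auto
  then have "rank X x + rank C x = x" using rank_compl[OF X] unfolding C_def by blast
  ultimately have "x \<le> k * (a + b) + a" using x by (simp add: add_mult_distrib2)
  then show ?thesis using rank_mono[OF finX] x by metis
qed simp

lemma chunk_less_compl_chunk_iff:
  assumes "X \<subseteq> {1..m * (a + b)}" "card X = m * a" "k < m"
  shows "(\<forall>x\<in>chunk X a k. \<forall>y\<in>chunk ({1..m * (a + b)} - X) b k. x < y) \<longleftrightarrow>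
    Suc k * a \<le> rank X (k * (a + b) + a)"
  using chunk_less_compl_chunk[OF assms(1,3)] rank_ge_if_chunk_less_compl_chunk[OF assms] by blast

section \<open>Two-row set-valued tableaux\<close>

lemma cells_two_rows: "cells [m, m] = {1, 2} \<times> {1..m}"
proof (intro set_eqI iffI)
  fix c assume "c \<in> cells [m, m]"
  moreover have "1 \<le> i \<Longrightarrow> i \<le> 2 \<Longrightarrow> i = 1 \<or> i = (2::nat)" for i by linarith
  ultimately show "c \<in> {1, 2} \<times> {1..m}" unfolding cells_def by fastforce
qed (auto simp: cells_def)

lemma density_total_two_rows:
  "density_total [m, m] (\<lambda>(i, j). if i = 1 then a else b) = m * (a + b)"
  unfolding density_total_def cells_two_rows
  by (simp add: sum.cartesian_product[symmetric] add_mult_distrib2)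

lemma mem_two_rows_iff: "c \<in> {1, 2} \<times> {1..m} \<longleftrightarrow> (\<exists>k<m. c = (1, Suc k) \<or> c = (2, Suc k))"
proof -
  have "j \<in> {1..m} \<longleftrightarrow> (\<exists>k<m. j = Suc k)" for j by (cases j) auto
  then show ?thesis by (cases c) (simp only: mem_Times_iff fst_conv snd_conv insert_iff
        singleton_iff prod.inject; blast)
qed

lemma UN_two_rows:
  fixes S :: "nat \<times> nat \<Rightarrow> 'a set"
  shows "(\<Union>c\<in>{1, 2} \<times> {1..m}. S c) = (\<Union>k<m. S (1, Suc k)) \<union> (\<Union>k<m. S (2, Suc k))"
proof -
  have "(\<Union>c\<in>{1, 2} \<times> {1..m}. S c) = (\<Union>j\<in>{1..m}. S (1, j)) \<union> (\<Union>j\<in>{1..m}. S (2, j))"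
    by auto
  then show ?thesis by (simp only: image_Suc_lessThan[symmetric] image_image)
qed

lemma SVT_two_rows_sorted_blocks:
  assumes S: "S \<in> SVT [m, m] (\<lambda>(i, j). if i = 1 then a else b)" and i: "i = 1 \<or> i = 2"
  shows "sorted_blocks (\<lambda>k. S (i, Suc k)) m (if i = 1 then a else b)"
  unfolding sorted_blocks_def
proof
  let ?C = "{1, 2} \<times> {1..m} :: (nat \<times> nat) set"
  note S' = S[unfolded SVT_def cells_two_rows density_total_two_rows mem_Collect_eq]
  have card: "\<forall>c\<in>?C. finite (S c) \<and> card (S c) = (case c of (i, j) \<Rightarrow> if i = 1 then a else b)"
    using S' by (elim conjE) assumption
  have row: "\<forall>i j. (i, j) \<in> ?C \<and> (i, Suc j) \<in> ?C \<longrightarrow> (\<forall>x\<in>S (i, j). \<forall>y\<in>S (i, Suc j). x < y)"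
    using S' by (elim conjE) assumption
  show "\<forall>k<m. finite (S (i, Suc k)) \<and> card (S (i, Suc k)) = (if i = 1 then a else b)"
    using card i by auto
  show "\<forall>k. Suc k < m \<longrightarrow> (\<forall>x\<in>S (i, Suc k). \<forall>y\<in>S (i, Suc (Suc k)). x < y)"
  proof (intro allI impI ballI)
    fix k x y assume "Suc k < m" "x \<in> S (i, Suc k)" "y \<in> S (i, Suc (Suc k))"
    then show "x < y" using row[rule_format, of i "Suc k" x y] i by auto
  qed
qed

lemma SVT_two_rowsD:
  assumes S: "S \<in> SVT [m, m] (\<lambda>(i, j). if i = 1 then a else b)"
  shows "c \<notin> {1, 2} \<times> {1..m} \<Longrightarrow> S c = {}"
    and "sorted_blocks (\<lambda>k. S (1, Suc k)) m a"
    and "sorted_blocks (\<lambda>k. S (2, Suc k)) m b"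
    and "(\<Union>k<m. S (1, Suc k)) \<inter> (\<Union>k<m. S (2, Suc k)) = {}"
    and "(\<Union>k<m. S (1, Suc k)) \<union> (\<Union>k<m. S (2, Suc k)) = {1..m * (a + b)}"
    and "k < m \<Longrightarrow> x \<in> S (1, Suc k) \<Longrightarrow> y \<in> S (2, Suc k) \<Longrightarrow> x < y"
proof -
  let ?C = "{1, 2} \<times> {1..m} :: (nat \<times> nat) set"
  note S' = S[unfolded SVT_def cells_two_rows density_total_two_rows UN_two_rows mem_Collect_eq]
  have "\<forall>c. c \<notin> ?C \<longrightarrow> S c = {}"
    using S' by (elim conjE) assumption
  then show "c \<notin> ?C \<Longrightarrow> S c = {}" by blast
  show "(\<Union>k<m. S (1, Suc k)) \<union> (\<Union>k<m. S (2, Suc k)) = {1..m * (a + b)}"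
    using S' by (elim conjE) assumption
  show "sorted_blocks (\<lambda>k. S (1, Suc k)) m a" "sorted_blocks (\<lambda>k. S (2, Suc k)) m b"
    using SVT_two_rows_sorted_blocks[OF S, of 1] SVT_two_rows_sorted_blocks[OF S, of 2] by simp_all
  have disj: "\<forall>c\<in>?C. \<forall>d\<in>?C. c \<noteq> d \<longrightarrow> S c \<inter> S d = {}"
    using S' by (elim conjE) assumption
  then have "S (1, Suc j) \<inter> S (2, Suc k) = {}" if "j < m" "k < m" for j k
    using that by auto
  then show "(\<Union>k<m. S (1, Suc k)) \<inter> (\<Union>k<m. S (2, Suc k)) = {}" by blast
  have column: "\<forall>i j. (i, j) \<in> ?C \<and> (Suc i, j) \<in> ?C \<longrightarrow> (\<forall>x\<in>S (i, j). \<forall>y\<in>S (Suc i, j). x < y)"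
    using S' by (elim conjE) assumption
  then show "x < y" if "k < m" "x \<in> S (1, Suc k)" "y \<in> S (2, Suc k)"
    using column[rule_format, of 1 "Suc k" x y] that by (simp add: numeral_2_eq_2)
qed

lemma two_rows_cells_disjoint:
  fixes S :: "nat \<times> nat \<Rightarrow> nat set"
  assumes row1: "sorted_blocks (\<lambda>k. S (1, Suc k)) m a"
    and row2: "sorted_blocks (\<lambda>k. S (2, Suc k)) m b"
    and disj: "(\<Union>k<m. S (1, Suc k)) \<inter> (\<Union>k<m. S (2, Suc k)) = {}"
  shows "\<forall>c\<in>{1, 2} \<times> {1..m}. \<forall>d\<in>{1, 2} \<times> {1..m}. c \<noteq> d \<longrightarrow> S c \<inter> S d = {}"
proof (intro ballI impI)
  fix c d :: "nat \<times> nat"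
  assume "c \<in> {1, 2} \<times> {1..m}" "d \<in> {1, 2} \<times> {1..m}" "c \<noteq> d"
  obtain j where j: "j < m" "c = (1, Suc j) \<or> c = (2, Suc j)"
    using \<open>c \<in> _\<close> unfolding mem_two_rows_iff by blast
  obtain k where k: "k < m" "d = (1, Suc k) \<or> d = (2, Suc k)"
    using \<open>d \<in> _\<close> unfolding mem_two_rows_iff by blast
  have "S (1, Suc j) \<inter> S (2, Suc k) = {}" "S (2, Suc j) \<inter> S (1, Suc k) = {}"
    using disj j(1) k(1) by blast+
  moreover have "S (i, Suc j) \<inter> S (i, Suc k) = {}" if "j \<noteq> k" "i = 1 \<or> i = 2" for i
    using sorted_blocks_disjoint[OF row1 j(1) k(1)] sorted_blocks_disjoint[OF row2 j(1) k(1)] that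
    by auto
  ultimately show "S c \<inter> S d = {}" using j(2) k(2) \<open>c \<noteq> d\<close> by auto
qed

lemma SVT_two_rowsI:
  assumes out: "\<And>c. c \<notin> {1, 2} \<times> {1..m} \<Longrightarrow> S c = {}"
    and row1: "sorted_blocks (\<lambda>k. S (1, Suc k)) m a"
    and row2: "sorted_blocks (\<lambda>k. S (2, Suc k)) m b"
    and disj: "(\<Union>k<m. S (1, Suc k)) \<inter> (\<Union>k<m. S (2, Suc k)) = {}"
    and union: "(\<Union>k<m. S (1, Suc k)) \<union> (\<Union>k<m. S (2, Suc k)) = {1..m * (a + b)}"
    and column: "\<And>k x y. k < m \<Longrightarrow> x \<in> S (1, Suc k) \<Longrightarrow> y \<in> S (2, Suc k) \<Longrightarrow> x < y"
  shows "S \<in> SVT [m, m] (\<lambda>(i, j). if i = 1 then a else b)"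
proof -
  let ?C = "{1, 2} \<times> {1..m} :: (nat \<times> nat) set"
  have card: "\<forall>c\<in>?C. finite (S c) \<and> card (S c) = (case c of (i, j) \<Rightarrow> if i = 1 then a else b)"
  proof
    fix c assume "c \<in> ?C"
    then obtain k where "k < m" "c = (1, Suc k) \<or> c = (2, Suc k)" unfolding mem_two_rows_iff by blast
    moreover have "finite (S (1, Suc k)) \<and> card (S (1, Suc k)) = a"
      "finite (S (2, Suc k)) \<and> card (S (2, Suc k)) = b"
      using row1 row2 \<open>k < m\<close> unfolding sorted_blocks_def by blast+
    ultimately show "finite (S c) \<and> card (S c) = (case c of (i, j) \<Rightarrow> if i = 1 then a else b)"
      by (elim disjE) simp_all
  qed
  have rows: "\<forall>i j. (i, j) \<in> ?C \<and> (i, Suc j) \<in> ?C \<longrightarrow> (\<forall>x\<in>S (i, j). \<forall>y\<in>S (i, Suc j). x < y)"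
  proof (intro allI impI ballI)
    fix i j x y assume ij: "(i, j) \<in> ?C \<and> (i, Suc j) \<in> ?C" and xy: "x \<in> S (i, j)" "y \<in> S (i, Suc j)"
    then obtain k where k: "j = Suc k" "Suc k < m" by (cases j) auto
    from ij have "i = 1 \<or> i = 2" by auto
    then show "x < y"
      using sorted_blocks_less[OF row1, of k "Suc k"] sorted_blocks_less[OF row2, of k "Suc k"] xy k
      by auto
  qed
  have columns: "\<forall>i j. (i, j) \<in> ?C \<and> (Suc i, j) \<in> ?C \<longrightarrow> (\<forall>x\<in>S (i, j). \<forall>y\<in>S (Suc i, j). x < y)"
  proof (intro allI impI ballI)
    fix i j x y assume ij: "(i, j) \<in> ?C \<and> (Suc i, j) \<in> ?C" and xy: "x \<in> S (i, j)" "y \<in> S (Suc i, j)"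
    then obtain k where k: "j = Suc k" "k < m" by (cases j) auto
    from ij have "i = 1" by auto
    then show "x < y" using column[OF k(2)] xy k by (simp add: numeral_2_eq_2)
  qed
  have "\<forall>c. c \<notin> ?C \<longrightarrow> S c = {}" using out by blast
  with card two_rows_cells_disjoint[OF row1 row2 disj] union rows columns show ?thesis
    unfolding SVT_def cells_two_rows density_total_two_rows UN_two_rows mem_Collect_eq
    by (intro conjI)
qed

definition first_row :: "nat \<Rightarrow> (nat \<times> nat \<Rightarrow> nat set) \<Rightarrow> nat set" where
  "first_row m S = (\<Union>k<m. S (1, Suc k))"

definition first_rows :: "nat \<Rightarrow> nat \<Rightarrow> nat \<Rightarrow> nat set set" where
  "first_rows m a b = {X. X \<subseteq> {1..m * (a + b)} \<and> card X = m * a \<and>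
     (\<forall>k<m. \<forall>x\<in>chunk X a k. \<forall>y\<in>chunk ({1..m * (a + b)} - X) b k. x < y)}"

definition two_row_tableau :: "nat \<Rightarrow> nat \<Rightarrow> nat \<Rightarrow> nat set \<Rightarrow> nat \<times> nat \<Rightarrow> nat set" where
  "two_row_tableau m a b X = (\<lambda>(i, j).
     if j = 0 \<or> m < j then {}
     else if i = 1 then chunk X a (j - 1)
     else if i = 2 then chunk ({1..m * (a + b)} - X) b (j - 1)
     else {})"

text \<open>The row index is a variable here because the simplifier rewrites \<open>1 :: nat\<close> to \<open>Suc 0\<close>.\<close>
lemma two_row_tableau_Suc:
  "k < m \<Longrightarrow> i = 1 \<Longrightarrow> two_row_tableau m a b X (i, Suc k) = chunk X a k"
  "k < m \<Longrightarrow> i = 2 \<Longrightarrow> two_row_tableau m a b X (i, Suc k) = chunk ({1..m * (a + b)} - X) b k"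
  unfolding two_row_tableau_def by simp_all

lemma SVT_rows_eq_chunks:
  assumes S: "S \<in> SVT [m, m] (\<lambda>(i, j). if i = 1 then a else b)" and k: "k < m"
  shows "S (1, Suc k) = chunk (first_row m S) a k"
    and "S (2, Suc k) = chunk ({1..m * (a + b)} - first_row m S) b k"
proof -
  have "{1..m * (a + b)} - first_row m S = (\<Union>k<m. S (2, Suc k))"
    using SVT_two_rowsD(4,5)[OF S] unfolding first_row_def by blast
  then show "S (1, Suc k) = chunk (first_row m S) a k"
    and "S (2, Suc k) = chunk ({1..m * (a + b)} - first_row m S) b k"
    unfolding first_row_def
    using sorted_blocks_eq_chunk[OF SVT_two_rowsD(2)[OF S] k]
      sorted_blocks_eq_chunk[OF SVT_two_rowsD(3)[OF S] k]
    by simp_all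
qed

lemma first_row_in_first_rows:
  assumes S: "S \<in> SVT [m, m] (\<lambda>(i, j). if i = 1 then a else b)"
  shows "first_row m S \<in> first_rows m a b"
  unfolding first_rows_def
proof (intro CollectI conjI allI impI ballI)
  show "first_row m S \<subseteq> {1..m * (a + b)}"
    using SVT_two_rowsD(5)[OF S] unfolding first_row_def by blast
  show "card (first_row m S) = m * a"
    unfolding first_row_def using card_UN_sorted_blocks[OF SVT_two_rowsD(2)[OF S]] by simp
  fix k x y assume "k < m" "x \<in> chunk (first_row m S) a k"
    "y \<in> chunk ({1..m * (a + b)} - first_row m S) b k"
  then show "x < y" using SVT_two_rowsD(6)[OF S] SVT_rows_eq_chunks[OF S] by simp
qed

lemma two_row_tableau_first_row:
  assumes S: "S \<in> SVT [m, m] (\<lambda>(i, j). if i = 1 then a else b)"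
  shows "two_row_tableau m a b (first_row m S) = S"
proof
  fix c :: "nat \<times> nat"
  show "two_row_tableau m a b (first_row m S) c = S c"
  proof (cases "c \<in> {1, 2} \<times> {1..m}")
    case True
    then obtain k where "k < m" "c = (1, Suc k) \<or> c = (2, Suc k)"
      unfolding mem_two_rows_iff by blast
    then show ?thesis
      using SVT_rows_eq_chunks[OF S] by (elim disjE) (simp_all add: two_row_tableau_Suc)
  next
    case False
    then show ?thesis
      using SVT_two_rowsD(1)[OF S] unfolding two_row_tableau_def by (cases c) auto
  qed
qed

lemma first_row_two_row_tableau:
  assumes "X \<in> first_rows m a b"
  shows "first_row m (two_row_tableau m a b X) = X"
proof -
  have "finite X" "card X = m * a" using assms unfolding first_rows_def by (auto intro: finite_subset)
  then show ?thesis unfolding first_row_def by (simp add: two_row_tableau_Suc UN_chunk)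
qed

lemma two_row_tableau_in_SVT:
  assumes X: "X \<in> first_rows m a b"
  shows "two_row_tableau m a b X \<in> SVT [m, m] (\<lambda>(i, j). if i = 1 then a else b)"
proof (rule SVT_two_rowsI)
  define C where "C = {1..m * (a + b)} - X"
  have X_sub: "X \<subseteq> {1..m * (a + b)}" and cardX: "card X = m * a"
    using X unfolding first_rows_def by auto
  have finX: "finite X" and finC: "finite C" using X_sub unfolding C_def by (auto intro: finite_subset)
  have cardC: "card C = m * b"
    using card_Diff_subset[OF finX X_sub] cardX unfolding C_def by (simp add: add_mult_distrib2)
  have rows: "two_row_tableau m a b X (1, Suc k) = chunk X a k"
    "two_row_tableau m a b X (2, Suc k) = chunk C b k" if "k < m" for k
    using that unfolding C_def by (simp_all add: two_row_tableau_Suc)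
  have row1: "(\<Union>k<m. two_row_tableau m a b X (1, Suc k)) = X"
    using UN_chunk[OF finX cardX] rows by simp
  have row2: "(\<Union>k<m. two_row_tableau m a b X (2, Suc k)) = C"
    using UN_chunk[OF finC cardC] rows by simp
  show "two_row_tableau m a b X c = {}" if "c \<notin> {1, 2} \<times> {1..m}" for c
    using that unfolding two_row_tableau_def by (cases c) auto
  show "sorted_blocks (\<lambda>k. two_row_tableau m a b X (1, Suc k)) m a"
    using sorted_blocks_cong[of m, OF rows(1)] sorted_blocks_chunk[OF finX cardX] by simp
  show "sorted_blocks (\<lambda>k. two_row_tableau m a b X (2, Suc k)) m b"
    using sorted_blocks_cong[of m, OF rows(2)] sorted_blocks_chunk[OF finC cardC] by simp
  show "(\<Union>k<m. two_row_tableau m a b X (1, Suc k)) \<inter> (\<Union>k<m. two_row_tableau m a b X (2, Suc k)) = {}"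
    unfolding row1 row2 C_def by blast
  show "(\<Union>k<m. two_row_tableau m a b X (1, Suc k)) \<union> (\<Union>k<m. two_row_tableau m a b X (2, Suc k))
      = {1..m * (a + b)}"
    unfolding row1 row2 C_def using X_sub by blast
  show "x < y" if "k < m" "x \<in> two_row_tableau m a b X (1, Suc k)"
    "y \<in> two_row_tableau m a b X (2, Suc k)" for k x y
    using X that rows unfolding C_def first_rows_def by simp
qed

lemma bij_betw_first_row:
  "bij_betw (first_row m) (SVT [m, m] (\<lambda>(i, j). if i = 1 then a else b)) (first_rows m a b)"
proof (rule bij_betw_byWitness[where f' = "two_row_tableau m a b"])
  show "\<forall>S\<in>SVT [m, m] (\<lambda>(i, j). if i = 1 then a else b). two_row_tableau m a b (first_row m S) = S"
    using two_row_tableau_first_row by blast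
  show "\<forall>X\<in>first_rows m a b. first_row m (two_row_tableau m a b X) = X"
    using first_row_two_row_tableau by blast
  show "first_row m ` SVT [m, m] (\<lambda>(i, j). if i = 1 then a else b) \<subseteq> first_rows m a b"
    using first_row_in_first_rows by blast
  show "two_row_tableau m a b ` first_rows m a b \<subseteq> SVT [m, m] (\<lambda>(i, j). if i = 1 then a else b)"
    using two_row_tableau_in_SVT by blast
qed

section \<open>The tennis ball process\<close>

definition ballot_lawns :: "nat \<Rightarrow> nat \<Rightarrow> nat \<Rightarrow> nat set set" where
  "ballot_lawns s t n = {L. L \<subseteq> {1..n * s} \<and> card L = n * t \<and> (\<forall>k\<le>n. k * t \<le> rank L (k * s))}"

lemma ballot_lawns_lower_part:
  assumes L: "L \<in> ballot_lawns s t (Suc i)"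
  shows "{x\<in>L. rank L x \<le> i * t} \<in> ballot_lawns s t i"
proof -
  let ?L0 = "{x\<in>L. rank L x \<le> i * t}"
  have fin: "finite L" and card: "card L = Suc i * t" and ballot: "\<And>k. k \<le> Suc i \<Longrightarrow> k * t \<le> rank L (k * s)"
    using L unfolding ballot_lawns_def by (auto intro: finite_subset)
  have it: "i * t \<le> card L" using card by simp
  have "?L0 \<subseteq> {1..i * s}"
  proof
    fix x assume x: "x \<in> ?L0"
    have "\<not> i * s < x"
      using rank_strict_mono[OF fin, of x "i * s"] x ballot[of i] by auto
    then show "x \<in> {1..i * s}" using x L unfolding ballot_lawns_def by auto
  qed
  moreover have "k * t \<le> rank ?L0 (k * s)" if "k \<le> i" for k
    using ballot[of k] that rank_lower_part[OF fin it] by (simp add: mult_le_mono1)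
  ultimately show ?thesis
    unfolding ballot_lawns_def using card_rank_le[OF fin it] by simp
qed

lemma tennis_states_ballot_lawns:
  "(P, L) \<in> tennis_states s t i \<Longrightarrow> P = {1..i * s} - L \<and> L \<in> ballot_lawns s t i"
proof (induction i arbitrary: P L)
  case 0
  then show ?case by (simp add: ballot_lawns_def rank_def)
next
  case (Suc i)
  let ?B = "{i * s + 1..Suc i * s}"
  from Suc.prems obtain P0 L0 T where
    P: "P = (P0 \<union> ?B) - T" and L: "L = L0 \<union> T" and st: "(P0, L0) \<in> tennis_states s t i"
    and T: "T \<subseteq> P0 \<union> ?B" "card T = t"
    by auto
  from Suc.IH[OF st] have P0: "P0 = {1..i * s} - L0" and L0: "L0 \<in> ballot_lawns s t i" by blast+
  have L0_sub: "L0 \<subseteq> {1..i * s}" and card_L0: "card L0 = i * t"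
    and ballot: "\<And>k. k \<le> i \<Longrightarrow> k * t \<le> rank L0 (k * s)"
    using L0 unfolding ballot_lawns_def by auto
  have pool: "P0 \<union> ?B = {1..Suc i * s} - L0" using P0 L0_sub by auto
  have "L0 \<inter> T = {}" "finite T" "finite L0" using T(1) pool L0_sub by (auto intro: finite_subset)
  then have card_L: "card L = Suc i * t"
    using L card_L0 T(2) by (simp add: card_Un_disjoint)
  have L_sub: "L \<subseteq> {1..Suc i * s}" using L L0_sub T(1) pool by auto
  have "k * t \<le> rank L (k * s)" if "k \<le> Suc i" for k
  proof (cases "k \<le> i")
    case True
    have "rank L0 (k * s) \<le> rank L (k * s)"
      unfolding rank_def L using \<open>finite T\<close> L0_sub by (intro card_mono) (auto intro: finite_subset)
    then show ?thesis using ballot[OF True] by simp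
  next
    case False
    then have "k = Suc i" using that by simp
    moreover have "\<forall>y\<in>L. y \<le> Suc i * s" using L_sub by auto
    ultimately show ?thesis using card_L rank_eq_card_iff[of L "k * s"] L_sub by (simp add: finite_subset)
  qed
  then have "L \<in> ballot_lawns s t (Suc i)" unfolding ballot_lawns_def using L_sub card_L by blast
  moreover have "P = {1..Suc i * s} - L" using P pool L by auto
  ultimately show ?case by blast
qed

lemma ballot_lawn_in_tennis_states:
  "L \<in> ballot_lawns s t i \<Longrightarrow> ({1..i * s} - L, L) \<in> tennis_states s t i"
proof (induction i arbitrary: L)
  case 0
  then show ?case by (simp add: ballot_lawns_def)
next
  case (Suc i)
  let ?B = "{i * s + 1..Suc i * s}"
  define L0 where "L0 = {x\<in>L. rank L x \<le> i * t}"
  define T where "T = L - L0"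
  have L_sub: "L \<subseteq> {1..Suc i * s}" and card_L: "card L = Suc i * t"
    using Suc.prems unfolding ballot_lawns_def by auto
  have fin: "finite L" using L_sub by (auto intro: finite_subset)
  have L0: "L0 \<in> ballot_lawns s t i"
    unfolding L0_def using ballot_lawns_lower_part[OF Suc.prems] .
  then have L0_sub: "L0 \<subseteq> {1..i * s}" and card_L0: "card L0 = i * t"
    unfolding ballot_lawns_def by auto
  have "card T = t"
    unfolding T_def using card_Diff_subset[of L0 L] fin card_L card_L0 by (auto simp: L0_def)
  moreover have "T \<subseteq> ({1..i * s} - L0) \<union> ?B" using L_sub unfolding T_def by auto
  ultimately have "((({1..i * s} - L0) \<union> ?B) - T, L0 \<union> T) \<in> tennis_states s t (Suc i)"
    using Suc.IH[OF L0] by auto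
  moreover have "L0 \<union> T = L" "(({1..i * s} - L0) \<union> ?B) - T = {1..Suc i * s} - L"
    using L_sub L0_sub unfolding T_def L0_def by auto
  ultimately show ?case by simp
qed

lemma tennis_lawns_eq_ballot_lawns: "tennis_lawns s t n = ballot_lawns s t n"
  unfolding tennis_lawns_def
  using tennis_states_ballot_lawns ballot_lawn_in_tennis_states by force

definition shift_lawn :: "nat \<Rightarrow> nat set \<Rightarrow> nat set" where
  "shift_lawn t L = {1..t} \<union> (\<lambda>x. x + t) ` L"

lemma card_shift_lawn: "finite L \<Longrightarrow> 0 \<notin> L \<Longrightarrow> card (shift_lawn t L) = t + card L"
  unfolding shift_lawn_def
  by (subst card_Un_disjoint) (auto simp: card_image inj_on_def)

lemma rank_shift_lawn: "0 \<notin> L \<Longrightarrow> rank (shift_lawn t L) (x + t) = t + rank L x"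
proof -
  assume "0 \<notin> L"
  moreover have "{y\<in>shift_lawn t L. y \<le> x + t} = shift_lawn t {y\<in>L. y \<le> x}"
    unfolding shift_lawn_def by auto
  moreover have "finite {y\<in>L. y \<le> x}" by simp
  ultimately show ?thesis unfolding rank_def by (simp add: card_shift_lawn)
qed

lemma inj_on_shift_lawn: "inj_on (shift_lawn t) {L. 0 \<notin> L}"
proof (rule inj_onI)
  fix L L' assume "L \<in> {L. 0 \<notin> L}" "L' \<in> {L. 0 \<notin> L}" and eq: "shift_lawn t L = shift_lawn t L'"
  have "shift_lawn t M - {1..t} = (\<lambda>x. x + t) ` M" if "0 \<notin> M" for M
    using that unfolding shift_lawn_def by auto
  then have "(\<lambda>x. x + t) ` L = (\<lambda>x. x + t) ` L'" using eq \<open>L \<in> _\<close> \<open>L' \<in> _\<close> by (metis mem_Collect_eq)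
  then show "L = L'" by (simp add: inj_image_eq_iff inj_def)
qed

lemma shift_lawn_unshift:
  assumes "{1..t} \<subseteq> X" "0 \<notin> X"
  shows "shift_lawn t ((\<lambda>x. x - t) ` (X - {1..t})) = X"
proof -
  have "x - t + t = x" if "x \<in> X - {1..t}" for x
    using that assms(2) by (cases "x = 0") auto
  then have "(\<lambda>x. x - t + t) ` (X - {1..t}) = X - {1..t}" by simp
  then show ?thesis using assms(1) unfolding shift_lawn_def by (auto simp: image_image)
qed

lemma shift_lawn_in_image_ballot_lawns:
  assumes X: "X \<subseteq> {1..Suc n * s}" "card X = Suc n * t"
    and ballot: "\<And>k. k \<le> n \<Longrightarrow> Suc k * t \<le> rank X (k * s + t)"
  shows "X \<in> shift_lawn t ` ballot_lawns s t n"
proof -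
  have "finite X" "0 \<notin> X" using X(1) by (auto intro: finite_subset)
  have init: "{1..t} \<subseteq> X"
    using atLeastAtMost_subset_if_rank_ge[OF \<open>0 \<notin> X\<close>] ballot[of 0] by simp
  have top: "\<forall>x\<in>X. x \<le> n * s + t"
    using ballot[of n] X(2) rank_le_card[OF \<open>finite X\<close>, of "n * s + t"]
      rank_eq_card_iff[OF \<open>finite X\<close>] by simp
  define L where "L = (\<lambda>x. x - t) ` (X - {1..t})"
  have X_eq: "X = shift_lawn t L"
    unfolding L_def using shift_lawn_unshift[OF init \<open>0 \<notin> X\<close>] by simp
  have "t < x \<and> x \<le> n * s + t" if "x \<in> X - {1..t}" for x
    using that top \<open>0 \<notin> X\<close> by (cases "x = 0") auto
  then have "0 \<notin> L" "L \<subseteq> {1..n * s}" unfolding L_def by fastforce+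
  moreover have "card L = n * t"
    using card_shift_lawn[of L t] X(2) X_eq \<open>0 \<notin> L\<close> \<open>L \<subseteq> _\<close> by (simp add: finite_subset)
  moreover have "k * t \<le> rank L (k * s)" if "k \<le> n" for k
    using ballot[OF that] rank_shift_lawn[OF \<open>0 \<notin> L\<close>] X_eq by simp
  ultimately have "L \<in> ballot_lawns s t n" unfolding ballot_lawns_def by blast
  then show ?thesis using X_eq by blast
qed

lemma shift_ballot_lawns:
  assumes "t \<le> s"
  shows "shift_lawn t ` ballot_lawns s t n =
    {X. X \<subseteq> {1..Suc n * s} \<and> card X = Suc n * t \<and> (\<forall>k\<le>n. Suc k * t \<le> rank X (k * s + t))}"
proof (intro equalityI subsetI)
  fix X assume "X \<in> {X. X \<subseteq> {1..Suc n * s} \<and> card X = Suc n * t \<and>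
      (\<forall>k\<le>n. Suc k * t \<le> rank X (k * s + t))}"
  then show "X \<in> shift_lawn t ` ballot_lawns s t n"
    using shift_lawn_in_image_ballot_lawns[of X n s t] by auto
next
  fix X assume "X \<in> shift_lawn t ` ballot_lawns s t n"
  then obtain L where X: "X = shift_lawn t L" and "L \<in> ballot_lawns s t n" by blast
  then have L: "L \<subseteq> {1..n * s}" "card L = n * t" "\<And>k. k \<le> n \<Longrightarrow> k * t \<le> rank L (k * s)"
    unfolding ballot_lawns_def by auto
  then have "0 \<notin> L" "finite L" by (auto intro: finite_subset)
  have "X \<subseteq> {1..Suc n * s}" using L(1) assms unfolding X shift_lawn_def by auto
  moreover have "card X = Suc n * t"
    using card_shift_lawn[OF \<open>finite L\<close> \<open>0 \<notin> L\<close>] L(2) X by simp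
  moreover have "Suc k * t \<le> rank X (k * s + t)" if "k \<le> n" for k
    using rank_shift_lawn[OF \<open>0 \<notin> L\<close>] L(3)[OF that] X by simp
  ultimately show "X \<in> {X. X \<subseteq> {1..Suc n * s} \<and> card X = Suc n * t \<and>
      (\<forall>k\<le>n. Suc k * t \<le> rank X (k * s + t))}" by blast
qed

lemma shift_ballot_lawns_eq_first_rows:
  assumes "t \<le> s"
  shows "shift_lawn t ` ballot_lawns s t n = first_rows (Suc n) t (s - t)"
proof -
  have N: "t + (s - t) = s" using assms by simp
  have ballot_iff_column: "(\<forall>k\<le>n. Suc k * t \<le> rank X (k * s + t)) \<longleftrightarrow>
      (\<forall>k<Suc n. \<forall>x\<in>chunk X t k. \<forall>y\<in>chunk ({1..Suc n * s} - X) (s - t) k. x < y)"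
    if "X \<subseteq> {1..Suc n * s}" "card X = Suc n * t" for X
    using chunk_less_compl_chunk_iff[of X "Suc n" t "s - t"] that by (simp add: N less_Suc_eq_le)
  show ?thesis
    unfolding shift_ballot_lawns[OF assms] first_rows_def N
    by (intro Collect_cong conj_cong refl) (rule ballot_iff_column)
qed

theorem theorem4:
  fixes s t n :: nat
  assumes "1 \<le> t" and "t \<le> s"
  shows "tennis_count s t n =
         card (SVT [n + 1, n + 1] (\<lambda>(i, j). if i = 1 then t else s - t))"
proof -
  have "tennis_count s t n = card (shift_lawn t ` ballot_lawns s t n)"
    unfolding tennis_count_def tennis_lawns_eq_ballot_lawns
    by (rule card_image[symmetric], rule inj_on_subset[OF inj_on_shift_lawn])
      (auto simp: ballot_lawns_def)
  also have "\<dots> = card (first_rows (n + 1) t (s - t))"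
    using shift_ballot_lawns_eq_first_rows[OF \<open>t \<le> s\<close>] by simp
  also have "\<dots> = card (SVT [n + 1, n + 1] (\<lambda>(i, j). if i = 1 then t else s - t))"
    using bij_betw_same_card[OF bij_betw_first_row] by simp
  finally show ?thesis .
qed

end
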